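(* For every integer $n\ge 0$, $|\mathfrak D^1_{2n}(1342,1423)|=s_{n+1}$, where $s_m$ is the $m$th little Schröder number.
   Context: A Dumont permutation of the first kind of length $2n$ is a permutation $\pi\in\mathfrak S_{2n}$ such that for every $i=1,\dots,2n$: if $\pi(i)$ is even then $i<2n$ and $\pi(i)>\pi(i+1)$; if $\pi(i)$ is odd then $i=2n$ or $\pi(i)<\pi(i+1)$. $\mathfrak D^1_{2n}$ denotes the set of these ($\mathfrak D^1_0$ consists of the empty permutation). A permutation $\sigma$ contains a pattern $\tau\in\mathfrak S_k$ if some subsequence $(\sigma(i_1),\dots,\sigma(i_k))$, $i_1<\dots<i_k$, is order-isomorphic to $\tau$; otherwise $\sigma$ avoids $\tau$. $\mathfrak D^1_{2n}(T)$ denotes the set of permutations in $\mathfrak D^1_{2n}$ avoiding every pattern in $T$. The little Schröder numbers $s_1,s_2,\dots$ ($1,1,3,11,45,\dots$) are defined by the generating function $\sum_{m\ge 1}s_mx^m=\frac{1+x-\sqrt{1-6x+x^2}}{4}$. *)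

theory Defs
  imports Main "HOL-Combinatorics.Permutations" "HOL-Computational_Algebra.Formal_Power_Series"
begin

definition dumont1 :: "nat \<Rightarrow> (nat \<Rightarrow> nat) \<Rightarrow> bool" where
  "dumont1 n \<pi> \<longleftrightarrow> \<pi> permutes {1..2*n} \<and>
     (\<forall>i\<in>{1..2*n}.
        (even (\<pi> i) \<longrightarrow> i < 2*n \<and> \<pi> i > \<pi> (i+1)) \<and>
        (odd (\<pi> i) \<longrightarrow> i = 2*n \<or> \<pi> i < \<pi> (i+1)))"

definition contains_pattern :: "nat \<Rightarrow> (nat \<Rightarrow> nat) \<Rightarrow> nat list \<Rightarrow> bool" where
  "contains_pattern m \<sigma> \<tau> \<longleftrightarrow>
     (\<exists>idx :: nat \<Rightarrow> nat.
        (\<forall>j<length \<tau>. idx j \<in> {1..m}) \<and>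
        (\<forall>a b. a < b \<and> b < length \<tau> \<longrightarrow> idx a < idx b) \<and>
        (\<forall>a<length \<tau>. \<forall>b<length \<tau>. (\<sigma> (idx a) < \<sigma> (idx b) \<longleftrightarrow> \<tau> ! a < \<tau> ! b)))"

definition avoids :: "nat \<Rightarrow> (nat \<Rightarrow> nat) \<Rightarrow> nat list \<Rightarrow> bool" where
  "avoids m \<sigma> \<tau> \<longleftrightarrow> \<not> contains_pattern m \<sigma> \<tau>"

definition dumont1_avoiding :: "nat \<Rightarrow> nat list set \<Rightarrow> (nat \<Rightarrow> nat) set" where
  "dumont1_avoiding n T = {\<pi>. dumont1 n \<pi> \<and> (\<forall>\<tau>\<in>T. avoids (2*n) \<pi> \<tau>)}"

text \<open>Little Schroeder numbers: coefficients of (1 + x - sqrt(1 - 6x + x^2))/4,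
  where the square root is the formal power series square root with constant term 1.\<close>
definition little_schroeder_gf :: "real fps" where
  "little_schroeder_gf =
     fps_const (1/4) * (1 + fps_X - fps_radical (\<lambda>k x. root k x) 2 (1 - 6 * fps_X + fps_X ^ 2))"

definition little_schroeder :: "nat \<Rightarrow> real" where
  "little_schroeder m = fps_nth little_schroeder_gf m"

end

(* Let pi be a Dumont permutation of length 2n+2 avoiding 1342 and 1423. Its value 2n+2 is even,
   so a descent follows it; its value 2n+1 is odd, so it is either immediately followed by 2n+2 or
   the last entry. An entry in front of these two values that is smaller than an entry behind them
   would give a 1342 in the first case and a 1423 (ending with 2n+1) in the second. Hence everything
   in front lies above everything behind, and pi is either (sigma + 2m) (2n+1) (2n+2) tau with m > 0
   or (sigma + 2m) (2n+2) tau (2n+1), where sigma and tau are avoiders of lengths 2k and 2m with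
   k + m = n; conversely both gluings stay in the class. So c(n+1) = sum_{k<n} c(k) c(n-k) +
   sum_{k<=n} c(k) c(n-k) with c(0) = 1, and the quadratic equation 2 S^2 - (1 + x) S + x = 0 of the
   generating function S of the little Schroeder numbers gives the same recurrence for s(n+2). *)

theory Submission
  imports Defs
begin

unbundle fps_syntax

section \<open>Little Schroeder numbers\<close>

lemma little_schroeder_gf_quadratic:
  "2 * little_schroeder_gf ^ 2 - (1 + fps_X) * little_schroeder_gf + fps_X = 0"
proof -
  define D :: "real fps" where "D = 1 - 6 * fps_X + fps_X ^ 2"
  define R where "R = fps_radical (\<lambda>k x. root k x) 2 D"
  define S where "S = little_schroeder_gf"
  have "R ^ 2 = D"
    using power_radical[of D "\<lambda>k x. root k x" 1] unfolding R_def D_def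
    by (simp add: numeral_2_eq_2)
  have S: "S = fps_const (1/4) * (1 + fps_X - R)"
    unfolding S_def little_schroeder_gf_def R_def D_def by simp
  have "4 * fps_const (1/4 :: real) = 1"
    by (simp add: numeral_fps_const fps_const_mult [symmetric])
  then have "4 * S = 1 + fps_X - R"
    unfolding S by (metis mult.assoc mult_1)
  then have "R = 1 + fps_X - 4 * S"
    by (simp add: algebra_simps)
  with \<open>R ^ 2 = D\<close> have "(1 + fps_X - 4 * S) ^ 2 = D"
    by simp
  then have "(8 :: real fps) * (2 * S ^ 2 - (1 + fps_X) * S + fps_X) = 0"
    unfolding D_def by (simp add: algebra_simps power2_eq_square)
  then show ?thesis
    unfolding S_def by (metis mult_eq_0_iff numeral_neq_fps_zero)
qed

lemma little_schroeder_0: "little_schroeder 0 = 0"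
  by (simp add: little_schroeder_def little_schroeder_gf_def)

lemma little_schroeder_1: "little_schroeder 1 = 1"
proof -
  have "(2 * little_schroeder_gf ^ 2 - (1 + fps_X) * little_schroeder_gf + fps_X) $ 1 = 0"
    using little_schroeder_gf_quadratic by simp
  then show ?thesis
    using little_schroeder_0
    by (simp add: little_schroeder_def power2_eq_square fps_mult_nth numeral_fps_const algebra_simps)
qed

lemma little_schroeder_recurrence:
  "little_schroeder (n + 2) =
     (\<Sum>k<n. little_schroeder (k + 1) * little_schroeder (n - k + 1)) +
     (\<Sum>k\<le>n. little_schroeder (k + 1) * little_schroeder (n - k + 1))"
proof -
  let ?s = little_schroeder
  define f where "f i = ?s i * ?s (n + 2 - i)" for i
  have "(little_schroeder_gf ^ 2) $ (n + 2) = (\<Sum>i\<le>Suc (Suc n). f i)"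
    by (simp add: power2_eq_square fps_mult_nth f_def atLeast0AtMost little_schroeder_def)
  also have "\<dots> = f 0 + (\<Sum>k\<le>n. f (Suc k)) + f (Suc (Suc n))"
    by (subst sum.atMost_Suc_shift) (simp only: sum.atMost_Suc add.assoc)
  also have "\<dots> = (\<Sum>k\<le>n. ?s (k + 1) * ?s (n - k + 1))"
    by (auto simp: f_def little_schroeder_0 Suc_diff_le intro!: sum.cong)
  finally have sq: "(little_schroeder_gf ^ 2) $ (n + 2) = (\<Sum>k\<le>n. ?s (k + 1) * ?s (n - k + 1))" .
  have "(2 * little_schroeder_gf ^ 2 - (1 + fps_X) * little_schroeder_gf + fps_X) $ (n + 2) = 0"
    using little_schroeder_gf_quadratic by simp
  then have "?s (n + 2) = 2 * (\<Sum>k\<le>n. ?s (k + 1) * ?s (n - k + 1)) - ?s (n + 1)"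
    using sq by (simp add: little_schroeder_def numeral_fps_const algebra_simps)
  then show ?thesis
    using little_schroeder_1 by (simp add: lessThan_Suc_atMost [symmetric])
qed

definition occurrence :: "nat \<Rightarrow> (nat \<Rightarrow> nat) \<Rightarrow> nat list \<Rightarrow> (nat \<Rightarrow> nat) \<Rightarrow> bool" where
  "occurrence m \<sigma> \<tau> idx \<longleftrightarrow>
     (\<forall>j<length \<tau>. idx j \<in> {1..m}) \<and>
     (\<forall>a b. a < b \<and> b < length \<tau> \<longrightarrow> idx a < idx b) \<and>
     (\<forall>a<length \<tau>. \<forall>b<length \<tau>. \<sigma> (idx a) < \<sigma> (idx b) \<longleftrightarrow> \<tau> ! a < \<tau> ! b)"

lemma contains_pattern_iff_occurrence:
  "contains_pattern m \<sigma> \<tau> \<longleftrightarrow> (\<exists>idx. occurrence m \<sigma> \<tau> idx)"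
  unfolding contains_pattern_def occurrence_def ..

lemma contains_patternI:
  assumes "sorted_wrt (<) ps" "set ps \<subseteq> {1..m}" "length ps = length \<tau>"
    and "\<forall>a<length \<tau>. \<forall>b<length \<tau>. \<sigma> (ps ! a) < \<sigma> (ps ! b) \<longleftrightarrow> \<tau> ! a < \<tau> ! b"
  shows "contains_pattern m \<sigma> \<tau>"
proof -
  have "ps ! j \<in> {1..m}" if "j < length \<tau>" for j
    using assms(2,3) that by (metis nth_mem subsetD)
  then have "occurrence m \<sigma> \<tau> ((!) ps)"
    using assms(1,3,4) by (simp add: occurrence_def sorted_wrt_iff_nth_less)
  then show ?thesis
    by (auto simp: contains_pattern_iff_occurrence)
qed

lemma contains_1342I:
  assumes "1 \<le> a" "a < b" "b < c" "c < d" "d \<le> m" "\<sigma> a < \<sigma> d" "\<sigma> d < \<sigma> b" "\<sigma> b < \<sigma> c"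
  shows "contains_pattern m \<sigma> [1,3,4,2]"
  by (rule contains_patternI[of "[a, b, c, d]"]) (use assms in \<open>auto simp: All_less_Suc numeral_eq_Suc\<close>)

lemma contains_1423I:
  assumes "1 \<le> a" "a < b" "b < c" "c < d" "d \<le> m" "\<sigma> a < \<sigma> c" "\<sigma> c < \<sigma> d" "\<sigma> d < \<sigma> b"
  shows "contains_pattern m \<sigma> [1,4,2,3]"
  by (rule contains_patternI[of "[a, b, c, d]"]) (use assms in \<open>auto simp: All_less_Suc numeral_eq_Suc\<close>)

definition block_at :: "(nat \<Rightarrow> nat) \<Rightarrow> nat \<Rightarrow> nat \<Rightarrow> nat \<Rightarrow> (nat \<Rightarrow> nat) \<Rightarrow> bool" where
  "block_at \<pi> s t l \<sigma> \<longleftrightarrow> (\<forall>i\<in>{1..l}. \<pi> (s + i) = \<sigma> i + t)"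

lemma block_atD: "block_at \<pi> s t l \<sigma> \<Longrightarrow> i \<in> {1..l} \<Longrightarrow> \<pi> (s + i) = \<sigma> i + t"
  by (simp add: block_at_def)

lemma contains_pattern_block:
  assumes "block_at \<pi> s t l \<sigma>" "s + l \<le> m" "contains_pattern l \<sigma> \<tau>"
  shows "contains_pattern m \<pi> \<tau>"
proof -
  obtain idx where idx: "occurrence l \<sigma> \<tau> idx"
    using assms(3) by (auto simp: contains_pattern_iff_occurrence)
  have "\<pi> (s + idx j) = \<sigma> (idx j) + t" if "j < length \<tau>" for j
    using assms(1) idx that by (auto simp: block_at_def occurrence_def)
  then have "occurrence m \<pi> \<tau> (\<lambda>j. s + idx j)"
    using idx assms(2) by (fastforce simp: occurrence_def)
  then show ?thesis
    by (auto simp: contains_pattern_iff_occurrence)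
qed

lemma contains_pattern_in_block:
  assumes "block_at \<pi> s t l \<sigma>" "occurrence m \<pi> \<tau> idx"
    and "\<forall>j<length \<tau>. s < idx j \<and> idx j \<le> s + l"
  shows "contains_pattern l \<sigma> \<tau>"
proof -
  have "\<pi> (idx j) = \<sigma> (idx j - s) + t" if "j < length \<tau>" for j
  proof -
    have "idx j - s \<in> {1..l}" "s + (idx j - s) = idx j"
      using assms(3) that by auto
    then show ?thesis
      using assms(1) unfolding block_at_def by metis
  qed
  then have "occurrence l \<sigma> \<tau> (\<lambda>j. idx j - s)"
    using assms(2,3) by (fastforce simp: occurrence_def)
  then show ?thesis
    by (auto simp: contains_pattern_iff_occurrence)
qed

lemma dumont1_iff:
  "dumont1 n \<pi> \<longleftrightarrow> \<pi> permutes {1..2*n} \<and>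
     (\<forall>i\<in>{1..<2*n}. \<pi> (i + 1) < \<pi> i \<longleftrightarrow> even (\<pi> i)) \<and> (0 < n \<longrightarrow> odd (\<pi> (2*n)))"
proof
  assume d: "dumont1 n \<pi>"
  have "\<pi> (i + 1) < \<pi> i \<longleftrightarrow> even (\<pi> i)" if "i \<in> {1..<2*n}" for i
  proof -
    have "i \<in> {1..2*n}"
      using that by simp
    with d have "(even (\<pi> i) \<longrightarrow> \<pi> (i + 1) < \<pi> i) \<and> (odd (\<pi> i) \<longrightarrow> i = 2*n \<or> \<pi> i < \<pi> (i + 1))"
      unfolding dumont1_def by blast
    then show ?thesis
      using that by auto
  qed
  moreover have "odd (\<pi> (2*n))" if "0 < n"
    using d that unfolding dumont1_def by fastforce
  ultimately show "\<pi> permutes {1..2*n} \<and>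
     (\<forall>i\<in>{1..<2*n}. \<pi> (i + 1) < \<pi> i \<longleftrightarrow> even (\<pi> i)) \<and> (0 < n \<longrightarrow> odd (\<pi> (2*n)))"
    using d unfolding dumont1_def by blast
next
  assume "\<pi> permutes {1..2*n} \<and>
     (\<forall>i\<in>{1..<2*n}. \<pi> (i + 1) < \<pi> i \<longleftrightarrow> even (\<pi> i)) \<and> (0 < n \<longrightarrow> odd (\<pi> (2*n)))"
  then have perm: "\<pi> permutes {1..2*n}"
    and desc: "\<And>i. i \<in> {1..<2*n} \<Longrightarrow> \<pi> (i + 1) < \<pi> i \<longleftrightarrow> even (\<pi> i)"
    and last: "0 < n \<Longrightarrow> odd (\<pi> (2*n))"
    by auto
  have "(even (\<pi> i) \<longrightarrow> i < 2*n \<and> \<pi> i > \<pi> (i + 1)) \<and> (odd (\<pi> i) \<longrightarrow> i = 2*n \<or> \<pi> i < \<pi> (i + 1))"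
    if i: "i \<in> {1..2*n}" for i
  proof (cases "i = 2*n")
    case True
    then show ?thesis
      using last i by auto
  next
    case False
    have "\<pi> i \<noteq> \<pi> (i + 1)"
      using injD[OF permutes_inj[OF perm]] by fastforce
    then show ?thesis
      using desc[of i] i False by auto
  qed
  with perm show "dumont1 n \<pi>"
    unfolding dumont1_def by blast
qed

lemma dumont1_descent_iff:
  "dumont1 n \<pi> \<Longrightarrow> i \<in> {1..<2*n} \<Longrightarrow> \<pi> (i + 1) < \<pi> i \<longleftrightarrow> even (\<pi> i)"
  by (simp add: dumont1_iff)

lemma dumont1_last_odd: "dumont1 n \<pi> \<Longrightarrow> 0 < n \<Longrightarrow> odd (\<pi> (2*n))"
  by (simp add: dumont1_iff)

lemma dumont1_odd_if_ascent:
  "dumont1 n \<pi> \<Longrightarrow> i \<in> {1..2*n} \<Longrightarrow> i = 2*n \<or> \<pi> i < \<pi> (i + 1) \<Longrightarrow> odd (\<pi> i)"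
  unfolding dumont1_def by fastforce

lemma dumont1_last_ne_max: "dumont1 (Suc n) \<pi> \<Longrightarrow> \<pi> (2*n + 2) \<noteq> 2*n + 2"
  using dumont1_last_odd[of "Suc n" \<pi>] by auto

lemma dumont1_permutes: "dumont1 n \<pi> \<Longrightarrow> \<pi> permutes {1..2*n}"
  by (simp add: dumont1_iff)

lemma dumont1_avoiding_subset_permutations:
  "dumont1_avoiding n T \<subseteq> {\<sigma>. \<sigma> permutes {1..2*n}}"
  using dumont1_permutes unfolding dumont1_avoiding_def by blast

lemma dumont1_prefix_offset_even:
  assumes d: "dumont1 n \<pi>" and "1 < r" "r \<le> 2*n"
    and prefix: "\<pi> ` {1..<r} = {L<..L + (r - 1)}" and above: "L + (r - 1) < \<pi> r"
  shows "even L"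
proof -
  have "L + 1 \<in> \<pi> ` {1..<r}"
    using prefix \<open>1 < r\<close> by simp
  then obtain z where z: "z \<in> {1..<r}" "\<pi> z = L + 1"
    by (metis imageE)
  have "\<pi> z < \<pi> (z + 1)"
  proof (cases "z + 1 = r")
    case False
    then have "\<pi> (z + 1) \<in> {L<..L + (r - 1)}"
      using prefix z by auto
    moreover have "\<pi> (z + 1) \<noteq> \<pi> z"
      using injD[OF permutes_inj[OF dumont1_permutes[OF d]]] by fastforce
    ultimately show ?thesis
      using z by auto
  qed (use above z in auto)
  then have "odd (\<pi> z)"
    using dumont1_odd_if_ascent[OF d, of z] z \<open>r \<le> 2*n\<close> by simp
  then show ?thesis
    using z by simp
qed

definition block :: "(nat \<Rightarrow> nat) \<Rightarrow> nat \<Rightarrow> nat \<Rightarrow> nat \<Rightarrow> nat \<Rightarrow> nat" where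
  "block \<pi> s t l i = (if i \<in> {1..l} then \<pi> (s + i) - t else i)"

lemma block_at_block:
  "\<forall>i\<in>{s<..s+l}. t \<le> \<pi> i \<Longrightarrow> block_at \<pi> s t l (block \<pi> s t l)"
  by (auto simp: block_at_def block_def)

lemma block_permutes:
  assumes "inj \<pi>" "\<forall>i\<in>{s<..s+l}. t < \<pi> i \<and> \<pi> i \<le> t + l"
  shows "block \<pi> s t l permutes {1..l}"
proof (rule inj_imp_permutes)
  show "inj_on (block \<pi> s t l) {1..l}"
  proof (rule inj_onI)
    fix x y assume xy: "x \<in> {1..l}" "y \<in> {1..l}" "block \<pi> s t l x = block \<pi> s t l y"
    moreover have "t < \<pi> (s + x)" "t < \<pi> (s + y)"
      using xy(1,2) assms(2) by auto
    ultimately have "\<pi> (s + x) = \<pi> (s + y)"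
      by (simp add: block_def)
    then show "x = y"
      using injD[OF assms(1)] by fastforce
  qed
  show "block \<pi> s t l i \<in> {1..l}" if "i \<in> {1..l}" for i
  proof -
    have "s + i \<in> {s<..s+l}"
      using that by simp
    then have "t < \<pi> (s + i) \<and> \<pi> (s + i) \<le> t + l"
      using assms(2) by blast
    then show ?thesis
      using that by (auto simp: block_def)
  qed
qed (auto simp: block_def)

lemma block_at_unique:
  assumes "block_at \<pi> s t l \<sigma>" "block_at \<pi> s t l \<sigma>'" "\<sigma> permutes {1..l}" "\<sigma>' permutes {1..l}"
  shows "\<sigma> = \<sigma>'"
proof
  fix i
  show "\<sigma> i = \<sigma>' i"
  proof (cases "i \<in> {1..l}")
    case True
    then show ?thesis
      using block_atD[OF assms(1) True] block_atD[OF assms(2) True] by simp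
  next
    case False
    then show ?thesis
      using permutes_not_in[OF assms(3) False] permutes_not_in[OF assms(4) False] by simp
  qed
qed

lemma dumont1_block:
  assumes d: "dumont1 n \<pi>" and sl: "s + 2*l \<le> 2*n" and "even t"
    and vals: "\<forall>i\<in>{s<..s+2*l}. t < \<pi> i \<and> \<pi> i \<le> t + 2*l"
    and last: "0 < l \<Longrightarrow> odd (\<pi> (s + 2*l))"
  shows "dumont1 l (block \<pi> s t (2*l))"
  unfolding dumont1_iff
proof (intro conjI ballI impI)
  show "block \<pi> s t (2*l) permutes {1..2*l}"
    using block_permutes[OF permutes_inj[OF dumont1_permutes[OF d]] vals] .
  have par: "even (block \<pi> s t (2*l) i) \<longleftrightarrow> even (\<pi> (s + i))" if "i \<in> {1..2*l}" for i
    using bspec[OF vals, of "s + i"] that \<open>even t\<close> by (auto simp: block_def)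
  show "block \<pi> s t (2*l) (i + 1) < block \<pi> s t (2*l) i \<longleftrightarrow> even (block \<pi> s t (2*l) i)"
    if i: "i \<in> {1..<2*l}" for i
  proof -
    have "block \<pi> s t (2*l) (i + 1) < block \<pi> s t (2*l) i \<longleftrightarrow> \<pi> (s + i + 1) < \<pi> (s + i)"
      using bspec[OF vals, of "s + i"] bspec[OF vals, of "s + i + 1"] i by (auto simp: block_def)
    also have "\<dots> \<longleftrightarrow> even (\<pi> (s + i))"
      using dumont1_descent_iff[OF d, of "s + i"] i sl by simp
    finally show ?thesis
      using par i by simp
  qed
  show "odd (block \<pi> s t (2*l) (2*l))" if "0 < l"
    using par[of "2*l"] last that by simp
qed

lemma block_mem_dumont1_avoiding:
  assumes \<pi>: "\<pi> \<in> dumont1_avoiding n T" and sl: "s + 2*l \<le> 2*n" and "even t"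
    and vals: "\<forall>i\<in>{s<..s+2*l}. t < \<pi> i \<and> \<pi> i \<le> t + 2*l"
    and "0 < l \<Longrightarrow> odd (\<pi> (s + 2*l))"
  shows "block \<pi> s t (2*l) \<in> dumont1_avoiding l T"
proof -
  have "block_at \<pi> s t (2*l) (block \<pi> s t (2*l))"
    using vals by (intro block_at_block) auto
  then have "avoids (2*l) (block \<pi> s t (2*l)) \<tau>" if "\<tau> \<in> T" for \<tau>
    using \<pi> that sl contains_pattern_block by (fastforce simp: dumont1_avoiding_def avoids_def)
  moreover have "dumont1 l (block \<pi> s t (2*l))"
    using \<pi> assms(2-) by (intro dumont1_block) (auto simp: dumont1_avoiding_def)
  ultimately show ?thesis
    by (simp add: dumont1_avoiding_def)
qed

lemma dumont1_last_in_block_odd: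
  assumes "dumont1 l \<sigma>" "block_at \<pi> s t (2*l) \<sigma>" "even t" "0 < l"
  shows "odd (\<pi> (s + 2*l))"
  using assms dumont1_last_odd[OF assms(1)] unfolding block_at_def by simp

lemma dumont1_descent_in_block:
  assumes \<sigma>: "dumont1 l \<sigma>" and B: "block_at \<pi> s t (2*l) \<sigma>" and "even t" and i: "i \<in> {1..2*l}"
    and ascent_at_end: "i = 2*l \<Longrightarrow> \<pi> (s + i) < \<pi> (s + i + 1)"
  shows "\<pi> (s + i + 1) < \<pi> (s + i) \<longleftrightarrow> even (\<pi> (s + i))"
proof (cases "i = 2*l")
  case True
  then have "odd (\<pi> (s + i))"
    using dumont1_last_in_block_odd[OF \<sigma> B \<open>even t\<close>] i by auto
  then show ?thesis
    using ascent_at_end True by simp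
next
  case False
  then have i': "i \<in> {1..<2*l}" "i + 1 \<in> {1..2*l}"
    using i by auto
  moreover have "\<pi> (s + i) = \<sigma> i + t" "\<pi> (s + (i + 1)) = \<sigma> (i + 1) + t"
    using block_atD[OF B i] block_atD[OF B i'(2)] by simp_all
  ultimately show ?thesis
    using dumont1_descent_iff[OF \<sigma>, of i] \<open>even t\<close> by (simp add: add.assoc)
qed

section \<open>Gluing two Dumont permutations around the two largest values\<close>

lemma permutes_if_image_eq:
  "finite A \<Longrightarrow> f ` A = A \<Longrightarrow> (\<And>x. x \<notin> A \<Longrightarrow> f x = x) \<Longrightarrow> f permutes A"
  by (rule bij_imp_permutes) (simp_all add: bij_betw_def finite_surj_inj)

lemma image_block_at:
  assumes "block_at \<pi> s t l \<sigma>" "\<sigma> permutes {1..l}"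
  shows "\<pi> ` {s<..s+l} = {t<..t+l}"
proof -
  have shift: "(+) s ` {1..l} = {s<..s+l}"
    by (simp only: image_add_atLeastAtMost) (simp add: atLeastSucAtMost_greaterThanAtMost add.commute)
  have "\<pi> ` {s<..s+l} = \<pi> ` ((+) s ` {1..l})"
    by (simp only: shift)
  also have "\<dots> = (\<lambda>v. v + t) ` (\<sigma> ` {1..l})"
    using assms(1) unfolding block_at_def image_image by (intro image_cong) auto
  also have "\<dots> = {t<..t+l}"
    using permutes_image[OF assms(2)]
    by (simp only: image_add_atLeastAtMost') (simp add: atLeastSucAtMost_greaterThanAtMost add.commute)
  finally show ?thesis .
qed

(* In one-line notation, with N = 2(k+m+1): glue_top_pair k m sigma rho is
   (sigma + 2m) (N-1) N rho, and glue_top_around k m sigma rho is (sigma + 2m) N rho (N-1). *)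
definition glue_top_pair :: "nat \<Rightarrow> nat \<Rightarrow> (nat \<Rightarrow> nat) \<Rightarrow> (nat \<Rightarrow> nat) \<Rightarrow> nat \<Rightarrow> nat" where
  "glue_top_pair k m \<sigma> \<rho> i =
     (if i \<in> {1..2*k} then \<sigma> i + 2*m
      else if i = 2*k + 1 then 2*(k+m) + 1
      else if i = 2*k + 2 then 2*(k+m) + 2
      else if i \<in> {2*k+2<..2*(k+m)+2} then \<rho> (i - (2*k+2))
      else i)"

definition glue_top_around :: "nat \<Rightarrow> nat \<Rightarrow> (nat \<Rightarrow> nat) \<Rightarrow> (nat \<Rightarrow> nat) \<Rightarrow> nat \<Rightarrow> nat" where
  "glue_top_around k m \<sigma> \<rho> i =
     (if i \<in> {1..2*k} then \<sigma> i + 2*m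
      else if i = 2*k + 1 then 2*(k+m) + 2
      else if i \<in> {2*k+1<..2*(k+m)+1} then \<rho> (i - (2*k+1))
      else if i = 2*(k+m) + 2 then 2*(k+m) + 1
      else i)"

lemma block_at_glue_top_pair:
  "block_at (glue_top_pair k m \<sigma> \<rho>) 0 (2*m) (2*k) \<sigma>"
  "block_at (glue_top_pair k m \<sigma> \<rho>) (2*k+2) 0 (2*m) \<rho>"
  by (auto simp: block_at_def glue_top_pair_def)

lemma block_at_glue_top_around:
  "block_at (glue_top_around k m \<sigma> \<rho>) 0 (2*m) (2*k) \<sigma>"
  "block_at (glue_top_around k m \<sigma> \<rho>) (2*k+1) 0 (2*m) \<rho>"
  by (auto simp: block_at_def glue_top_around_def)

lemma glue_top_pair_top:
  "glue_top_pair k m \<sigma> \<rho> (2*k+1) = 2*(k+m) + 1"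
  "glue_top_pair k m \<sigma> \<rho> (2*k+2) = 2*(k+m) + 2"
  by (simp_all add: glue_top_pair_def)

lemma glue_top_around_top:
  "glue_top_around k m \<sigma> \<rho> (2*k+1) = 2*(k+m) + 2"
  "glue_top_around k m \<sigma> \<rho> (2*(k+m)+2) = 2*(k+m) + 1"
  by (simp_all add: glue_top_around_def)

lemma glue_top_pair_eqI:
  assumes perm: "\<pi> permutes {1..2*(k+m+1)}" and L: "block_at \<pi> 0 (2*m) (2*k) \<sigma>"
    and "\<pi> (2*k+1) = 2*(k+m) + 1" "\<pi> (2*k+2) = 2*(k+m) + 2"
    and R: "block_at \<pi> (2*k+2) 0 (2*m) \<rho>"
  shows "\<pi> = glue_top_pair k m \<sigma> \<rho>"
proof
  fix i
  consider "i \<in> {1..2*k}" | "i = 2*k+1" | "i = 2*k+2" | "i \<in> {2*k+2<..2*(k+m)+2}"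
    | "i \<notin> {1..2*(k+m+1)}"
    by fastforce
  then show "\<pi> i = glue_top_pair k m \<sigma> \<rho> i"
  proof cases
    case 1
    then show ?thesis
      using block_atD[OF L 1] by (simp add: glue_top_pair_def)
  next
    case 4
    define j where "j = i - (2*k+2)"
    have "j \<in> {1..2*m}" "i = 2*k+2 + j"
      using 4 by (auto simp: j_def)
    then show ?thesis
      using block_atD[OF R \<open>j \<in> {1..2*m}\<close>] by (simp add: glue_top_pair_def)
  next
    case 5
    then have "glue_top_pair k m \<sigma> \<rho> i = i"
      by (auto simp: glue_top_pair_def)
    then show ?thesis
      using permutes_not_in[OF perm 5] by simp
  qed (use assms in \<open>simp_all add: glue_top_pair_def\<close>)
qed

lemma glue_top_around_eqI:
  assumes perm: "\<pi> permutes {1..2*(k+m+1)}" and L: "block_at \<pi> 0 (2*m) (2*k) \<sigma>"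
    and "\<pi> (2*k+1) = 2*(k+m) + 2" "\<pi> (2*(k+m)+2) = 2*(k+m) + 1"
    and R: "block_at \<pi> (2*k+1) 0 (2*m) \<rho>"
  shows "\<pi> = glue_top_around k m \<sigma> \<rho>"
proof
  fix i
  consider "i \<in> {1..2*k}" | "i = 2*k+1" | "i \<in> {2*k+1<..2*(k+m)+1}" | "i = 2*(k+m)+2"
    | "i \<notin> {1..2*(k+m+1)}"
    by fastforce
  then show "\<pi> i = glue_top_around k m \<sigma> \<rho> i"
  proof cases
    case 1
    then show ?thesis
      using block_atD[OF L 1] by (simp add: glue_top_around_def)
  next
    case 3
    define j where "j = i - (2*k+1)"
    have "j \<in> {1..2*m}" "i = 2*k+1 + j"
      using 3 by (auto simp: j_def)
    then show ?thesis
      using block_atD[OF R \<open>j \<in> {1..2*m}\<close>] by (simp add: glue_top_around_def)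
  next
    case 5
    then have "glue_top_around k m \<sigma> \<rho> i = i"
      by (auto simp: glue_top_around_def)
    then show ?thesis
      using permutes_not_in[OF perm 5] by simp
  qed (use assms in \<open>simp_all add: glue_top_around_def\<close>)
qed

lemma glue_top_pair_permutes:
  assumes "\<sigma> permutes {1..2*k}" "\<rho> permutes {1..2*m}"
  shows "glue_top_pair k m \<sigma> \<rho> permutes {1..2*(k+m+1)}"
proof (rule permutes_if_image_eq)
  let ?g = "glue_top_pair k m \<sigma> \<rho>"
  have "{1..2*(k+m+1)} = {0<..0+2*k} \<union> {2*k+1, 2*k+2} \<union> {2*k+2<..2*k+2+2*m}"
    by auto
  then have "?g ` {1..2*(k+m+1)} = {2*m<..2*m+2*k} \<union> {2*(k+m)+1, 2*(k+m)+2} \<union> {0<..0+2*m}"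
    using image_block_at[OF block_at_glue_top_pair(1) assms(1)]
      image_block_at[OF block_at_glue_top_pair(2) assms(2)] glue_top_pair_top by (simp add: image_Un)
  also have "\<dots> = {1..2*(k+m+1)}"
    by auto
  finally show "?g ` {1..2*(k+m+1)} = {1..2*(k+m+1)}" .
qed (auto simp: glue_top_pair_def)

lemma glue_top_around_permutes:
  assumes "\<sigma> permutes {1..2*k}" "\<rho> permutes {1..2*m}"
  shows "glue_top_around k m \<sigma> \<rho> permutes {1..2*(k+m+1)}"
proof (rule permutes_if_image_eq)
  let ?g = "glue_top_around k m \<sigma> \<rho>"
  have "{1..2*(k+m+1)} = {0<..0+2*k} \<union> {2*k+1, 2*(k+m)+2} \<union> {2*k+1<..2*k+1+2*m}"
    by auto
  then have "?g ` {1..2*(k+m+1)} = {2*m<..2*m+2*k} \<union> {2*(k+m)+2, 2*(k+m)+1} \<union> {0<..0+2*m}"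
    using image_block_at[OF block_at_glue_top_around(1) assms(1)]
      image_block_at[OF block_at_glue_top_around(2) assms(2)] glue_top_around_top by (simp add: image_Un)
  also have "\<dots> = {1..2*(k+m+1)}"
    by auto
  finally show "?g ` {1..2*(k+m+1)} = {1..2*(k+m+1)}" .
qed (auto simp: glue_top_around_def)

lemma glue_top_pair_regions:
  assumes "\<sigma> permutes {1..2*k}" "\<rho> permutes {1..2*m}" "i \<in> {1..2*(k+m+1)}"
  defines "g \<equiv> glue_top_pair k m \<sigma> \<rho>"
  shows "i \<le> 2*k \<and> 2*m < g i \<and> g i \<le> 2*(k+m) \<or> i = 2*k+1 \<and> g i = 2*(k+m)+1 \<or>
    i = 2*k+2 \<and> g i = 2*(k+m)+2 \<or> 2*k+2 < i \<and> g i \<le> 2*m"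
proof -
  have "\<sigma> i \<in> {1..2*k}" if "i \<in> {1..2*k}"
    using permutes_in_image[OF assms(1)] that by auto
  moreover have "\<rho> (i - (2*k+2)) \<le> 2*m" if "2*k+2 < i"
    using permutes_in_image[OF assms(2), of "i - (2*k+2)"] that assms(3) by auto
  ultimately show ?thesis
    using assms(3) unfolding g_def glue_top_pair_def by auto
qed

lemma glue_top_around_regions:
  assumes "\<sigma> permutes {1..2*k}" "\<rho> permutes {1..2*m}" "i \<in> {1..2*(k+m+1)}"
  defines "g \<equiv> glue_top_around k m \<sigma> \<rho>"
  shows "i \<le> 2*k \<and> 2*m < g i \<and> g i \<le> 2*(k+m) \<or> i = 2*k+1 \<and> g i = 2*(k+m)+2 \<or>
    2*k+1 < i \<and> i < 2*(k+m)+2 \<and> g i \<le> 2*m \<or> i = 2*(k+m)+2 \<and> g i = 2*(k+m)+1"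
proof -
  have "\<sigma> i \<in> {1..2*k}" if "i \<in> {1..2*k}"
    using permutes_in_image[OF assms(1)] that by auto
  moreover have "\<rho> (i - (2*k+1)) \<le> 2*m" if "2*k+1 < i" "i < 2*(k+m)+2"
    using permutes_in_image[OF assms(2), of "i - (2*k+1)"] that by auto
  ultimately show ?thesis
    using assms(3) unfolding g_def glue_top_around_def by auto
qed

lemma dumont1_glue_top_pair:
  assumes \<sigma>: "dumont1 k \<sigma>" and \<rho>: "dumont1 m \<rho>" and "0 < m"
  shows "dumont1 (k+m+1) (glue_top_pair k m \<sigma> \<rho>)"
  unfolding dumont1_iff
proof (intro conjI ballI impI)
  let ?g = "glue_top_pair k m \<sigma> \<rho>"
  note L = block_at_glue_top_pair(1)[of k m \<sigma> \<rho>] and R = block_at_glue_top_pair(2)[of k m \<sigma> \<rho>]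
  note regions = glue_top_pair_regions[OF dumont1_permutes[OF \<sigma>] dumont1_permutes[OF \<rho>]]
  note top = glue_top_pair_top[of k m \<sigma> \<rho>]
  show "?g permutes {1..2*(k+m+1)}"
    using glue_top_pair_permutes dumont1_permutes \<sigma> \<rho> by blast
  show "odd (?g (2*(k+m+1)))"
    using dumont1_last_in_block_odd[OF \<rho> R] \<open>0 < m\<close> by (simp add: algebra_simps)
  fix i assume i: "i \<in> {1..<2*(k+m+1)}"
  consider "i \<le> 2*k" | "i = 2*k+1" | "i = 2*k+2" | "2*k+2 < i"
    by linarith
  then show "?g (i + 1) < ?g i \<longleftrightarrow> even (?g i)"
  proof cases
    case 1
    have "?g (0 + i) < ?g (0 + i + 1)" if "i = 2*k"
      using that i regions[of i] top by auto
    then show ?thesis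
      using dumont1_descent_in_block[OF \<sigma> L _, of i] 1 i by simp
  next
    case 3
    then show ?thesis
      using regions[of "i + 1"] top \<open>0 < m\<close> by auto
  next
    case 4
    define j where "j = i - (2*k+2)"
    have "j \<in> {1..<2*m}" "i = 2*k+2 + j"
      using 4 i by (auto simp: j_def)
    then show ?thesis
      using dumont1_descent_in_block[OF \<rho> R _, of j] by simp
  qed (use top in simp)
qed

lemma dumont1_glue_top_around:
  assumes \<sigma>: "dumont1 k \<sigma>" and \<rho>: "dumont1 m \<rho>"
  shows "dumont1 (k+m+1) (glue_top_around k m \<sigma> \<rho>)"
  unfolding dumont1_iff
proof (intro conjI ballI impI)
  let ?g = "glue_top_around k m \<sigma> \<rho>"
  note L = block_at_glue_top_around(1)[of k m \<sigma> \<rho>] and R = block_at_glue_top_around(2)[of k m \<sigma> \<rho>]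
  note regions = glue_top_around_regions[OF dumont1_permutes[OF \<sigma>] dumont1_permutes[OF \<rho>]]
  note top = glue_top_around_top[of k m \<sigma> \<rho>]
  show "?g permutes {1..2*(k+m+1)}"
    using glue_top_around_permutes dumont1_permutes \<sigma> \<rho> by blast
  show "odd (?g (2*(k+m+1)))"
    using top by simp
  fix i assume i: "i \<in> {1..<2*(k+m+1)}"
  consider "i \<le> 2*k" | "i = 2*k+1" | "2*k+1 < i"
    by linarith
  then show "?g (i + 1) < ?g i \<longleftrightarrow> even (?g i)"
  proof cases
    case 1
    have "?g (0 + i) < ?g (0 + i + 1)" if "i = 2*k"
      using that i regions[of i] top by auto
    then show ?thesis
      using dumont1_descent_in_block[OF \<sigma> L _, of i] 1 i by simp
  next
    case 2
    then show ?thesis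
      using regions[of "i + 1"] top i by auto
  next
    case 3
    define j where "j = i - (2*k+1)"
    have j: "j \<in> {1..2*m}" "i = 2*k+1 + j"
      using 3 i by (auto simp: j_def)
    have "?g (2*k+1 + j) < ?g (2*k+1 + j + 1)" if "j = 2*m"
      using that j regions[of i] top by auto
    then show ?thesis
      using dumont1_descent_in_block[OF \<rho> R _ j(1)] j(2) by simp
  qed
qed

(* An occurrence of a pattern of this shape (1342, 1423 or 1432) cannot straddle the blocks of a
   glued permutation. *)
definition lead_min_pattern :: "nat list \<Rightarrow> bool" where
  "lead_min_pattern \<tau> \<longleftrightarrow> length \<tau> = 4 \<and> (\<forall>j\<in>{1,2,3}. \<tau> ! 0 < \<tau> ! j) \<and> \<tau> ! 3 < \<tau> ! 1"

lemma lead_min_1342_1423: "\<forall>\<tau>\<in>{[1,3,4,2], [1,4,2,3]}. lead_min_pattern \<tau>"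
  by (simp add: lead_min_pattern_def)

lemma lead_min_pattern_occurrence:
  assumes "lead_min_pattern \<tau>" "occurrence m \<pi> \<tau> idx"
  shows "1 \<le> idx 0" "idx 0 < idx 1" "idx 1 < idx 2" "idx 2 < idx 3" "idx 3 \<le> m"
    and "\<pi> (idx 0) < \<pi> (idx 1)" "\<pi> (idx 0) < \<pi> (idx 2)" "\<pi> (idx 0) < \<pi> (idx 3)"
    and "\<pi> (idx 3) < \<pi> (idx 1)"
proof -
  have \<tau>: "length \<tau> = 4" "\<tau> ! 0 < \<tau> ! 1" "\<tau> ! 0 < \<tau> ! 2" "\<tau> ! 0 < \<tau> ! 3" "\<tau> ! 3 < \<tau> ! 1"
    using assms(1) by (auto simp: lead_min_pattern_def)
  have rng: "\<forall>j<4. idx j \<in> {1..m}" and mono: "\<forall>a b. a < b \<and> b < 4 \<longrightarrow> idx a < idx b"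
    and ord: "\<forall>a<4. \<forall>b<4. \<pi> (idx a) < \<pi> (idx b) \<longleftrightarrow> \<tau> ! a < \<tau> ! b"
    using assms(2) \<tau>(1) unfolding occurrence_def by auto
  show "1 \<le> idx 0" "idx 3 \<le> m"
    using rng by auto
  show "idx 0 < idx 1" "idx 1 < idx 2" "idx 2 < idx 3"
    using mono by auto
  show "\<pi> (idx 0) < \<pi> (idx 1)" "\<pi> (idx 0) < \<pi> (idx 2)" "\<pi> (idx 0) < \<pi> (idx 3)"
    "\<pi> (idx 3) < \<pi> (idx 1)"
    using ord \<tau> by auto
qed

lemma lead_min_occurrence_in_block:
  assumes "lead_min_pattern \<tau>" "occurrence m \<pi> \<tau> idx" "block_at \<pi> s t l \<sigma>"
    and "s < idx 0" "idx 3 \<le> s + l"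
  shows "contains_pattern l \<sigma> \<tau>"
proof (rule contains_pattern_in_block[OF assms(3,2)])
  have "length \<tau> = 4"
    using assms(1) by (simp add: lead_min_pattern_def)
  moreover have "idx 0 \<le> idx j \<and> idx j \<le> idx 3" if "j < 4" for j
  proof -
    have "j = 0 \<or> j = 1 \<or> j = 2 \<or> j = 3"
      using that by auto
    then show ?thesis
      using lead_min_pattern_occurrence(2-4)[OF assms(1,2)] by auto
  qed
  ultimately show "\<forall>j<length \<tau>. s < idx j \<and> idx j \<le> s + l"
    using assms(4,5) by fastforce
qed

lemma glue_top_pair_avoids:
  assumes "\<sigma> permutes {1..2*k}" "\<rho> permutes {1..2*m}" "lead_min_pattern \<tau>"
    and "\<not> contains_pattern (2*k) \<sigma> \<tau>" "\<not> contains_pattern (2*m) \<rho> \<tau>"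
  shows "\<not> contains_pattern (2*(k+m+1)) (glue_top_pair k m \<sigma> \<rho>) \<tau>"
proof
  let ?g = "glue_top_pair k m \<sigma> \<rho>"
  assume "contains_pattern (2*(k+m+1)) ?g \<tau>"
  then obtain idx where occ: "occurrence (2*(k+m+1)) ?g \<tau> idx"
    by (auto simp: contains_pattern_iff_occurrence)
  note o = lead_min_pattern_occurrence[OF assms(3) occ]
  have "idx 3 \<le> 2*k \<or> 2*k+2 < idx 0"
    using o glue_top_pair_regions[OF assms(1,2), of "idx 0"] glue_top_pair_regions[OF assms(1,2), of "idx 1"]
      glue_top_pair_regions[OF assms(1,2), of "idx 3"] by auto
  then show False
  proof
    assume "idx 3 \<le> 2*k"
    then have "contains_pattern (2*k) \<sigma> \<tau>"
      using lead_min_occurrence_in_block[OF assms(3) occ block_at_glue_top_pair(1)] o(1) by simp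
    with assms(4) show False ..
  next
    assume "2*k+2 < idx 0"
    then have "contains_pattern (2*m) \<rho> \<tau>"
      using lead_min_occurrence_in_block[OF assms(3) occ block_at_glue_top_pair(2)] o(5) by simp
    with assms(5) show False ..
  qed
qed

lemma glue_top_around_avoids:
  assumes "\<sigma> permutes {1..2*k}" "\<rho> permutes {1..2*m}" "lead_min_pattern \<tau>"
    and "\<not> contains_pattern (2*k) \<sigma> \<tau>" "\<not> contains_pattern (2*m) \<rho> \<tau>"
  shows "\<not> contains_pattern (2*(k+m+1)) (glue_top_around k m \<sigma> \<rho>) \<tau>"
proof
  let ?g = "glue_top_around k m \<sigma> \<rho>"
  assume "contains_pattern (2*(k+m+1)) ?g \<tau>"
  then obtain idx where occ: "occurrence (2*(k+m+1)) ?g \<tau> idx"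
    by (auto simp: contains_pattern_iff_occurrence)
  note o = lead_min_pattern_occurrence[OF assms(3) occ]
  have "idx 3 \<le> 2*k \<or> 2*k+1 < idx 0 \<and> idx 3 \<le> 2*k+1+2*m"
    using o glue_top_around_regions[OF assms(1,2), of "idx 0"] glue_top_around_regions[OF assms(1,2), of "idx 1"]
      glue_top_around_regions[OF assms(1,2), of "idx 2"] glue_top_around_regions[OF assms(1,2), of "idx 3"]
    by auto
  then show False
  proof
    assume "idx 3 \<le> 2*k"
    then have "contains_pattern (2*k) \<sigma> \<tau>"
      using lead_min_occurrence_in_block[OF assms(3) occ block_at_glue_top_around(1)] o(1) by simp
    with assms(4) show False ..
  next
    assume "2*k+1 < idx 0 \<and> idx 3 \<le> 2*k+1+2*m"
    then have "contains_pattern (2*m) \<rho> \<tau>"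
      using lead_min_occurrence_in_block[OF assms(3) occ block_at_glue_top_around(2)] by simp
    with assms(5) show False ..
  qed
qed

lemma glue_top_pair_mem:
  assumes "\<sigma> \<in> dumont1_avoiding k T" "\<rho> \<in> dumont1_avoiding m T" "0 < m"
    and "\<forall>\<tau>\<in>T. lead_min_pattern \<tau>"
  shows "glue_top_pair k m \<sigma> \<rho> \<in> dumont1_avoiding (k+m+1) T"
  using assms dumont1_glue_top_pair glue_top_pair_avoids dumont1_permutes
  by (auto simp: dumont1_avoiding_def avoids_def)

lemma glue_top_around_mem:
  assumes "\<sigma> \<in> dumont1_avoiding k T" "\<rho> \<in> dumont1_avoiding m T"
    and "\<forall>\<tau>\<in>T. lead_min_pattern \<tau>"
  shows "glue_top_around k m \<sigma> \<rho> \<in> dumont1_avoiding (k+m+1) T"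
  using assms dumont1_glue_top_around glue_top_around_avoids dumont1_permutes
  by (auto simp: dumont1_avoiding_def avoids_def)

section \<open>Splitting at the two largest values\<close>

abbreviation dumont_1342_1423 :: "nat \<Rightarrow> (nat \<Rightarrow> nat) set" where
  "dumont_1342_1423 n \<equiv> dumont1_avoiding n {[1,3,4,2], [1,4,2,3]}"

lemma image_separated:
  assumes inj: "inj_on f (A \<union> B)" and img: "f ` (A \<union> B) = {1..c}"
    and sep: "\<forall>x\<in>A. \<forall>y\<in>B. f y < f x"
  shows "f ` B = {1..card B}" "f ` A = {card B<..c}"
proof -
  have fin: "finite B"
    using finite_imageD[of f "A \<union> B"] img inj by auto
  have "f y \<le> card B" if y: "y \<in> B" for y
  proof -
    have "{1..f y} \<subseteq> f ` B"
    proof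
      fix w assume w: "w \<in> {1..f y}"
      moreover have "f y \<in> {1..c}"
        using img y by blast
      ultimately have "w \<in> f ` (A \<union> B)"
        using img by auto
      then obtain z where z: "z \<in> A \<union> B" "w = f z"
        by blast
      then have "z \<notin> A"
        using sep y w by fastforce
      then show "w \<in> f ` B"
        using z by blast
    qed
    then have "card {1..f y} \<le> card (f ` B)"
      using fin by (intro card_mono) auto
    then show ?thesis
      using card_image_le[OF fin, of f] by simp
  qed
  moreover have "f ` B \<subseteq> {1..c}"
    using img by blast
  ultimately have low: "f ` B \<subseteq> {1..card B}"
    by auto
  moreover have "card (f ` B) = card B"
    using inj by (simp add: card_image inj_on_Un)
  ultimately show fB: "f ` B = {1..card B}"
    by (simp add: card_subset_eq)
  have "A \<inter> B = {}"
    using sep by fastforce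
  then have "A = (A \<union> B) - B"
    by blast
  then have "f ` A = f ` (A \<union> B) - f ` B"
    using inj_on_image_set_diff[OF inj, of "A \<union> B" B] by auto
  then show "f ` A = {card B<..c}"
    using img fB by auto
qed

locale top_positions =
  fixes n :: nat and \<pi> :: "nat \<Rightarrow> nat" and p q :: nat
  assumes avoider: "\<pi> \<in> dumont_1342_1423 (Suc n)"
    and max_pos: "\<pi> p = 2*n + 2" and next_pos: "\<pi> q = 2*n + 1"
begin

abbreviation before :: "nat set" where "before \<equiv> {1..<min p q}"
abbreviation after :: "nat set" where "after \<equiv> {min p q<..2*n+2} - {p, q}"

lemma dumont: "dumont1 (Suc n) \<pi>"
  using avoider by (simp add: dumont1_avoiding_def)

lemma perm: "\<pi> permutes {1..2*n+2}"
  using dumont1_permutes[OF dumont] by simp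

lemma inj: "inj \<pi>"
  using permutes_inj[OF perm] .

lemma positions: "p \<in> {1..<2*n+2}" "q \<in> {1..2*n+2}" "q + 1 = p \<or> q = 2*n + 2"
proof -
  show q: "q \<in> {1..2*n+2}"
    using permutes_in_image[OF perm, of q] next_pos by simp
  have "p \<in> {1..2*n+2}"
    using permutes_in_image[OF perm, of p] max_pos by simp
  moreover have "p \<noteq> 2*n+2"
    using dumont1_last_odd[OF dumont] max_pos by auto
  ultimately show "p \<in> {1..<2*n+2}"
    by simp
  show "q + 1 = p \<or> q = 2*n + 2"
  proof (rule disjCI)
    assume "q \<noteq> 2*n + 2"
    then have "\<not> \<pi> (q + 1) < \<pi> q"
      using dumont1_descent_iff[OF dumont, of q] q next_pos by simp
    moreover have "\<pi> (q + 1) \<noteq> \<pi> q" "\<pi> (q + 1) \<le> 2*n + 2"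
      using injD[OF inj, of "q + 1" q] permutes_in_image[OF perm, of "q + 1"] q \<open>q \<noteq> 2*n + 2\<close>
      by auto
    ultimately have "\<pi> (q + 1) = \<pi> p"
      using next_pos max_pos by simp
    then show "q + 1 = p"
      using injD[OF inj] by blast
  qed
qed

lemma separated:
  assumes x: "x \<in> before" and y: "y \<in> after"
  shows "\<pi> y < \<pi> x"
proof (rule ccontr)
  \<comment> \<open>otherwise x, q, p, y form a 1342, or x, p, y, 2n+2 form a 1423\<close>
  assume "\<not> \<pi> y < \<pi> x"
  moreover have "\<pi> y \<noteq> \<pi> x"
    using injD[OF inj, of y x] x y by auto
  ultimately have xy: "\<pi> x < \<pi> y"
    by simp
  have "\<pi> y \<noteq> \<pi> p" "\<pi> y \<noteq> \<pi> q" "\<pi> y \<le> 2*n + 2"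
    using injD[OF inj, of y] permutes_in_image[OF perm, of y] y by auto
  then have y_low: "\<pi> y < 2*n + 1"
    using max_pos next_pos by simp
  have no1342: "\<not> contains_pattern (2*n+2) \<pi> [1,3,4,2]"
    and no1423: "\<not> contains_pattern (2*n+2) \<pi> [1,4,2,3]"
    using avoider by (simp_all add: dumont1_avoiding_def avoids_def)
  from positions(3) show False
  proof
    assume "q + 1 = p"
    then have "contains_pattern (2*n+2) \<pi> [1,3,4,2]"
      using x y xy y_low max_pos next_pos by (intro contains_1342I[of x q p y]) auto
    with no1342 show False ..
  next
    assume "q = 2*n + 2"
    then have "contains_pattern (2*n+2) \<pi> [1,4,2,3]"
      using x y xy y_low max_pos next_pos positions(1)
      by (intro contains_1423I[of x p y "2*n+2"]) auto
    with no1423 show False ..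
  qed
qed

lemma before_Un_after: "before \<union> after = {1..2*n+2} - {p, q}"
  using positions by auto

lemma value_ranges: "\<pi> ` after = {1..card after}" "\<pi> ` before = {card after<..2*n}"
proof -
  have "before \<union> after = {1..2*n+2} - {p, q}"
    by (rule before_Un_after)
  also have "\<pi> ` \<dots> = \<pi> ` {1..2*n+2} - \<pi> ` {p, q}"
    using positions by (intro inj_on_image_set_diff[OF inj_on_subset[OF inj subset_UNIV]]) auto
  also have "\<dots> = {1..2*n+2} - {2*n+2, 2*n+1}"
    using permutes_image[OF perm] max_pos next_pos by simp
  also have "\<dots> = {1..2*n}"
    by auto
  finally have img: "\<pi> ` (before \<union> after) = {1..2*n}" .
  have "\<forall>x\<in>before. \<forall>y\<in>after. \<pi> y < \<pi> x"
    using separated by blast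
  from image_separated[OF inj_on_subset[OF inj subset_UNIV] img this]
  show "\<pi> ` after = {1..card after}" "\<pi> ` before = {card after<..2*n}"
    by simp_all
qed

lemma card_before_add_card_after: "card before + card after = 2*n"
proof -
  have "p \<noteq> q"
    using max_pos next_pos by auto
  then have "card ({1..2*n+2} - {p, q}) = 2*n"
    using positions by (subst card_Diff_subset) auto
  moreover have "card (before \<union> after) = card before + card after"
    by (rule card_Un_disjoint) auto
  ultimately show ?thesis
    using before_Un_after by simp
qed

lemma card_after_even: "even (card after)"
proof (cases "min p q = 1")
  case True
  then show ?thesis
    using card_before_add_card_after by simp
next
  case False
  have "card before = min p q - 1"
    by simp
  then have sum: "card after + (min p q - 1) = 2*n"
    using card_before_add_card_after by simp
  have "\<pi> ` {1..<min p q} = {card after<..card after + (min p q - 1)}"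
    unfolding sum by (rule value_ranges(2))
  moreover have "card after + (min p q - 1) < \<pi> (min p q)"
    using card_before_add_card_after \<open>card before = min p q - 1\<close> max_pos next_pos
    by (cases "p \<le> q") (simp_all add: min_def)
  moreover have "1 < min p q" "min p q \<le> 2 * Suc n"
    using positions False by auto
  ultimately show ?thesis
    using dumont1_prefix_offset_even[OF dumont] by blast
qed

lemma after_interval:
  "after = {p<..p + card after} \<and> (p + card after = 2*n + 2 \<or> p + card after + 1 = q)"
  using positions(3)
proof
  assume "q + 1 = p"
  then have "after = {p<..2*n+2}"
    by auto
  then show ?thesis
    using positions(1) by simp
next
  assume "q = 2*n + 2"
  then have "after = {p<..2*n+1}"
    using positions(1) by auto
  then show ?thesis
    using positions(1) \<open>q = 2*n + 2\<close> by simp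
qed

lemma left_block:
  assumes km: "k + m = n" and r: "min p q = 2*k + 1" and m: "card after = 2*m"
  shows "block \<pi> 0 (2*m) (2*k) \<in> dumont_1342_1423 k"
    and "block_at \<pi> 0 (2*m) (2*k) (block \<pi> 0 (2*m) (2*k))"
proof -
  have vals: "\<forall>i\<in>{0<..0 + 2*k}. 2*m < \<pi> i \<and> \<pi> i \<le> 2*m + 2*k"
  proof
    fix i assume "i \<in> {0<..0 + 2*k}"
    then have "i \<in> before"
      using r by auto
    then have "\<pi> i \<in> \<pi> ` before"
      by (rule imageI)
    then show "2*m < \<pi> i \<and> \<pi> i \<le> 2*m + 2*k"
      using value_ranges(2) m km by auto
  qed
  then show "block_at \<pi> 0 (2*m) (2*k) (block \<pi> 0 (2*m) (2*k))"
    by (intro block_at_block) auto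
  have "odd (\<pi> (2*k))" if "0 < k"
  proof -
    have "\<pi> (2*k) \<le> 2*n"
      using bspec[OF vals, of "2*k"] that km by simp
    moreover have "2*n < \<pi> (2*k + 1)"
      using r max_pos next_pos by (auto simp: min_def split: if_splits)
    ultimately show ?thesis
      using dumont1_odd_if_ascent[OF dumont, of "2*k"] that km by simp
  qed
  then show "block \<pi> 0 (2*m) (2*k) \<in> dumont_1342_1423 k"
    using km by (intro block_mem_dumont1_avoiding[OF avoider _ _ vals]) auto
qed

lemma right_block:
  assumes m: "card after = 2*m"
  shows "block \<pi> p 0 (2*m) \<in> dumont_1342_1423 m"
    and "block_at \<pi> p 0 (2*m) (block \<pi> p 0 (2*m))"
proof -
  have after: "after = {p<..p + 2*m}" and ends: "p + 2*m = 2*n + 2 \<or> p + 2*m + 1 = q"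
    using after_interval m by simp_all
  have vals: "\<forall>i\<in>{p<..p + 2*m}. 0 < \<pi> i \<and> \<pi> i \<le> 0 + 2*m"
  proof
    fix i assume "i \<in> {p<..p + 2*m}"
    then have "i \<in> after"
      using after by blast
    then have "\<pi> i \<in> \<pi> ` after"
      by (rule imageI)
    then show "0 < \<pi> i \<and> \<pi> i \<le> 0 + 2*m"
      using value_ranges(1) m by auto
  qed
  then show "block_at \<pi> p 0 (2*m) (block \<pi> p 0 (2*m))"
    by (intro block_at_block) auto
  have end_le: "p + 2*m \<le> 2*n + 2"
    using ends positions(2) by auto
  have "odd (\<pi> (p + 2*m))" if "0 < m"
  proof -
    have "\<pi> (p + 2*m) \<le> 2*m" "2*m \<le> 2*n"
      using vals that card_before_add_card_after m by auto
    with ends next_pos have "p + 2*m = 2*(Suc n) \<or> \<pi> (p + 2*m) < \<pi> (p + 2*m + 1)"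
      by auto
    then show ?thesis
      using dumont1_odd_if_ascent[OF dumont] that end_le by simp
  qed
  then show "block \<pi> p 0 (2*m) \<in> dumont_1342_1423 m"
    using end_le by (intro block_mem_dumont1_avoiding[OF avoider _ _ vals]) auto
qed

lemma decomposition:
  obtains k m where "k + m = n" "min p q = 2*k + 1"
    "block \<pi> 0 (2*m) (2*k) \<in> dumont_1342_1423 k" "block_at \<pi> 0 (2*m) (2*k) (block \<pi> 0 (2*m) (2*k))"
    "block \<pi> p 0 (2*m) \<in> dumont_1342_1423 m" "block_at \<pi> p 0 (2*m) (block \<pi> p 0 (2*m))"
proof -
  obtain m where m: "card after = 2*m"
    using card_after_even by (auto elim: evenE)
  define k where "k = n - m"
  have "card before = min p q - 1" "1 \<le> min p q"
    using positions by auto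
  then have "k + m = n" "min p q = 2*k + 1"
    using card_before_add_card_after m by (auto simp: k_def)
  then show ?thesis
    using that left_block right_block m by blast
qed

end

lemma dumont_1342_1423_Suc_cases:
  assumes \<pi>: "\<pi> \<in> dumont_1342_1423 (Suc n)" and p: "\<pi> p = 2*n + 2"
  obtains (top_pair) k \<sigma> \<rho> where "k < n" "\<sigma> \<in> dumont_1342_1423 k" "\<rho> \<in> dumont_1342_1423 (n - k)"
      "p = 2*k + 2" "\<pi> = glue_top_pair k (n - k) \<sigma> \<rho>"
  | (top_around) k \<sigma> \<rho> where "k \<le> n" "\<sigma> \<in> dumont_1342_1423 k" "\<rho> \<in> dumont_1342_1423 (n - k)"
      "p = 2*k + 1" "\<pi> = glue_top_around k (n - k) \<sigma> \<rho>"
proof -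
  have perm: "\<pi> permutes {1..2*(Suc n)}"
    using \<pi> dumont1_permutes unfolding dumont1_avoiding_def by blast
  then have "2*n + 1 \<in> \<pi> ` {1..2*(Suc n)}"
    by (simp add: permutes_image)
  then obtain q where q: "\<pi> q = 2*n + 1"
    by auto
  interpret top_positions n \<pi> p q
    using \<pi> p q by unfold_locales
  obtain k m where km: "k + m = n" and r: "min p q = 2*k + 1"
    and \<sigma>: "block \<pi> 0 (2*m) (2*k) \<in> dumont_1342_1423 k" "block_at \<pi> 0 (2*m) (2*k) (block \<pi> 0 (2*m) (2*k))"
    and \<rho>: "block \<pi> p 0 (2*m) \<in> dumont_1342_1423 m" "block_at \<pi> p 0 (2*m) (block \<pi> p 0 (2*m))"
    by (rule decomposition)
  have perm': "\<pi> permutes {1..2*(k+m+1)}"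
    using perm km by simp
  from positions(3) show thesis
  proof
    assume "q + 1 = p"
    then have "q = 2*k + 1" "p = 2*k + 2"
      using r by auto
    moreover have "k < n"
      using positions(1) \<open>p = 2*k + 2\<close> km by simp
    moreover have "\<pi> = glue_top_pair k m (block \<pi> 0 (2*m) (2*k)) (block \<pi> p 0 (2*m))"
      using \<sigma>(2) \<rho>(2) p q km \<open>q = 2*k + 1\<close> \<open>p = 2*k + 2\<close>
      by (intro glue_top_pair_eqI[OF perm']) simp_all
    ultimately show thesis
      using top_pair \<sigma>(1) \<rho>(1) km by (metis add_diff_cancel_left')
  next
    assume "q = 2*n + 2"
    then have "p = 2*k + 1"
      using r positions(1) by simp
    moreover have "\<pi> = glue_top_around k m (block \<pi> 0 (2*m) (2*k)) (block \<pi> p 0 (2*m))"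
      using \<sigma>(2) \<rho>(2) p q km \<open>q = 2*n + 2\<close> \<open>p = 2*k + 1\<close>
      by (intro glue_top_around_eqI[OF perm']) simp_all
    ultimately show thesis
      using top_around \<sigma>(1) \<rho>(1) km by (metis add_diff_cancel_left' le_add1)
  qed
qed

section \<open>Counting\<close>

lemma card_image_by_blocks:
  assumes "\<And>\<sigma> \<rho>. block_at (G \<sigma> \<rho>) s t (2*k) \<sigma>" "\<And>\<sigma> \<rho>. block_at (G \<sigma> \<rho>) s' t' (2*m) \<rho>"
  shows "card ((\<lambda>(\<sigma>, \<rho>). G \<sigma> \<rho>) ` (dumont1_avoiding k T \<times> dumont1_avoiding m T)) =
    card (dumont1_avoiding k T) * card (dumont1_avoiding m T)"
proof -
  have "inj_on (\<lambda>(\<sigma>, \<rho>). G \<sigma> \<rho>) (dumont1_avoiding k T \<times> dumont1_avoiding m T)"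
  proof (rule inj_onI, clarify)
    fix \<sigma> \<rho> \<sigma>' \<rho>'
    assume mem: "\<sigma> \<in> dumont1_avoiding k T" "\<rho> \<in> dumont1_avoiding m T"
      "\<sigma>' \<in> dumont1_avoiding k T" "\<rho>' \<in> dumont1_avoiding m T" and eq: "G \<sigma> \<rho> = G \<sigma>' \<rho>'"
    have "block_at (G \<sigma> \<rho>) s t (2*k) \<sigma>'" "block_at (G \<sigma> \<rho>) s' t' (2*m) \<rho>'"
      unfolding eq by (rule assms)+
    then show "\<sigma> = \<sigma>' \<and> \<rho> = \<rho>'"
      using block_at_unique[OF assms(1)] block_at_unique[OF assms(2)] mem
        dumont1_avoiding_subset_permutations by blast
  qed
  then show ?thesis
    by (simp add: card_image card_cartesian_product)
qed

lemma max_at_odd_position: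
  assumes "k \<le> n"
  shows "{\<pi> \<in> dumont_1342_1423 (Suc n). \<pi> (2*k + 1) = 2*n + 2} =
    (\<lambda>(\<sigma>, \<rho>). glue_top_around k (n - k) \<sigma> \<rho>) ` (dumont_1342_1423 k \<times> dumont_1342_1423 (n - k))"
proof (intro equalityI subsetI)
  fix \<pi> assume "\<pi> \<in> {\<pi> \<in> dumont_1342_1423 (Suc n). \<pi> (2*k + 1) = 2*n + 2}"
  then have "\<pi> \<in> dumont_1342_1423 (Suc n)" "\<pi> (2*k + 1) = 2*n + 2"
    by auto
  then show "\<pi> \<in> (\<lambda>(\<sigma>, \<rho>). glue_top_around k (n - k) \<sigma> \<rho>) ` (dumont_1342_1423 k \<times> dumont_1342_1423 (n - k))"
  proof (cases rule: dumont_1342_1423_Suc_cases)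
    case (top_pair k')
    then have False
      by presburger
    then show ?thesis ..
  qed auto
next
  fix \<pi> assume "\<pi> \<in> (\<lambda>(\<sigma>, \<rho>). glue_top_around k (n - k) \<sigma> \<rho>) ` (dumont_1342_1423 k \<times> dumont_1342_1423 (n - k))"
  then obtain \<sigma> \<rho> where \<sigma>: "\<sigma> \<in> dumont_1342_1423 k" and \<rho>: "\<rho> \<in> dumont_1342_1423 (n - k)"
    and \<pi>: "\<pi> = glue_top_around k (n - k) \<sigma> \<rho>"
    by auto
  have "\<pi> \<in> dumont_1342_1423 (k + (n - k) + 1)"
    unfolding \<pi> by (rule glue_top_around_mem[OF \<sigma> \<rho> lead_min_1342_1423])
  moreover have "\<pi> (2*k + 1) = 2*(k + (n - k)) + 2"
    unfolding \<pi> by (rule glue_top_around_top(1))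
  ultimately show "\<pi> \<in> {\<pi> \<in> dumont_1342_1423 (Suc n). \<pi> (2*k + 1) = 2*n + 2}"
    using assms by simp
qed

lemma max_at_even_position:
  assumes "k < n"
  shows "{\<pi> \<in> dumont_1342_1423 (Suc n). \<pi> (2*k + 2) = 2*n + 2} =
    (\<lambda>(\<sigma>, \<rho>). glue_top_pair k (n - k) \<sigma> \<rho>) ` (dumont_1342_1423 k \<times> dumont_1342_1423 (n - k))"
proof (intro equalityI subsetI)
  fix \<pi> assume "\<pi> \<in> {\<pi> \<in> dumont_1342_1423 (Suc n). \<pi> (2*k + 2) = 2*n + 2}"
  then have "\<pi> \<in> dumont_1342_1423 (Suc n)" "\<pi> (2*k + 2) = 2*n + 2"
    by auto
  then show "\<pi> \<in> (\<lambda>(\<sigma>, \<rho>). glue_top_pair k (n - k) \<sigma> \<rho>) ` (dumont_1342_1423 k \<times> dumont_1342_1423 (n - k))"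
  proof (cases rule: dumont_1342_1423_Suc_cases)
    case (top_around k')
    then have False
      by presburger
    then show ?thesis ..
  qed auto
next
  fix \<pi> assume "\<pi> \<in> (\<lambda>(\<sigma>, \<rho>). glue_top_pair k (n - k) \<sigma> \<rho>) ` (dumont_1342_1423 k \<times> dumont_1342_1423 (n - k))"
  then obtain \<sigma> \<rho> where \<sigma>: "\<sigma> \<in> dumont_1342_1423 k" and \<rho>: "\<rho> \<in> dumont_1342_1423 (n - k)"
    and \<pi>: "\<pi> = glue_top_pair k (n - k) \<sigma> \<rho>"
    by auto
  have "\<pi> \<in> dumont_1342_1423 (k + (n - k) + 1)"
    unfolding \<pi> using assms by (intro glue_top_pair_mem[OF \<sigma> \<rho> _ lead_min_1342_1423]) simp
  moreover have "\<pi> (2*k + 2) = 2*(k + (n - k)) + 2"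
    unfolding \<pi> by (rule glue_top_pair_top(2))
  ultimately show "\<pi> \<in> {\<pi> \<in> dumont_1342_1423 (Suc n). \<pi> (2*k + 2) = 2*n + 2}"
    using assms by simp
qed

lemma dumont_1342_1423_0: "dumont_1342_1423 0 = {id}"
proof -
  have "\<not> contains_pattern 0 \<pi> \<tau>" if "\<tau> \<noteq> []" for \<pi> \<tau>
    using that by (auto simp: contains_pattern_def)
  then show ?thesis
    by (auto simp: dumont1_avoiding_def dumont1_iff avoids_def)
qed

lemma card_by_position_of_max:
  "card (dumont_1342_1423 (Suc n)) = (\<Sum>i\<le>Suc (2*n). card {\<pi> \<in> dumont_1342_1423 (Suc n). \<pi> (i + 1) = 2*n + 2})"
proof -
  define F where "F i = {\<pi> \<in> dumont_1342_1423 (Suc n). \<pi> (i + 1) = 2*n + 2}" for i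
  have union: "dumont_1342_1423 (Suc n) = (\<Union>i\<le>Suc (2*n). F i)"
  proof (intro equalityI subsetI)
    fix \<pi> assume \<pi>: "\<pi> \<in> dumont_1342_1423 (Suc n)"
    then have "2*n + 2 \<in> \<pi> ` {1..2*(Suc n)}"
      using dumont1_avoiding_subset_permutations permutes_image by fastforce
    then obtain p where "p \<in> {1..2*n+2}" "\<pi> p = 2*n + 2"
      by auto
    then show "\<pi> \<in> (\<Union>i\<le>Suc (2*n). F i)"
      using \<pi> by (auto simp: F_def intro!: bexI[of _ "p - 1"])
  qed (auto simp: F_def)
  have fin: "finite (F i)" for i
    using finite_subset[OF dumont1_avoiding_subset_permutations finite_permutations]
    by (simp add: F_def)
  have disj: "F i \<inter> F j = {}" if "i \<noteq> j" for i j
  proof (rule ccontr)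
    assume "F i \<inter> F j \<noteq> {}"
    then obtain \<pi> where \<pi>: "\<pi> \<in> dumont_1342_1423 (Suc n)" "\<pi> (i + 1) = 2*n + 2" "\<pi> (j + 1) = 2*n + 2"
      by (auto simp: F_def)
    have "inj \<pi>"
      using \<pi>(1) dumont1_avoiding_subset_permutations permutes_inj by blast
    with \<pi>(2,3) \<open>i \<noteq> j\<close> show False
      by (metis add_right_cancel injD)
  qed
  have "card (dumont_1342_1423 (Suc n)) = card (\<Union>i\<le>Suc (2*n). F i)"
    by (simp only: union)
  also have "\<dots> = (\<Sum>i\<le>Suc (2*n). card (F i))"
    by (rule card_UN_disjoint) (use fin disj in auto)
  finally show ?thesis
    by (simp only: F_def)
qed

lemma card_dumont_1342_1423_Suc:
  "card (dumont_1342_1423 (Suc n)) =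
     (\<Sum>k<n. card (dumont_1342_1423 k) * card (dumont_1342_1423 (n - k))) +
     (\<Sum>k\<le>n. card (dumont_1342_1423 k) * card (dumont_1342_1423 (n - k)))"
proof -
  let ?c = "\<lambda>k. card (dumont_1342_1423 k) * card (dumont_1342_1423 (n - k))"
  let ?F = "\<lambda>i. {\<pi> \<in> dumont_1342_1423 (Suc n). \<pi> (i + 1) = 2*n + 2}"
  have "card (dumont_1342_1423 (Suc n)) = (\<Sum>k\<le>n. card (?F (2*k)) + card (?F (Suc (2*k))))"
    unfolding card_by_position_of_max by (rule sum.in_pairs_0)
  also have "\<dots> = (\<Sum>k\<le>n. ?c k + (if k < n then ?c k else 0))"
  proof (rule sum.cong)
    fix k assume "k \<in> {..n}"
    then have "card (?F (2*k)) = ?c k"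
      using max_at_odd_position[of k n] card_image_by_blocks[OF block_at_glue_top_around] by simp
    moreover have "card (?F (Suc (2*k))) = (if k < n then ?c k else 0)"
    proof (cases "k < n")
      case True
      then show ?thesis
        using max_at_even_position[OF True] card_image_by_blocks[OF block_at_glue_top_pair] by simp
    next
      case False
      then have "?F (Suc (2*k)) = {}"
        using \<open>k \<in> {..n}\<close> dumont1_last_ne_max by (auto simp: dumont1_avoiding_def)
      then have "card (?F (Suc (2*k))) = 0"
        by (simp only: card.empty)
      then show ?thesis
        using False by simp
    qed
    ultimately show "card (?F (2*k)) + card (?F (Suc (2*k))) = ?c k + (if k < n then ?c k else 0)"
      by simp
  qed simp
  also have "\<dots> = (\<Sum>k<n. ?c k) + (\<Sum>k\<le>n. ?c k)"
    by (simp add: sum.distrib lessThan_Suc_atMost [symmetric])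
  finally show ?thesis .
qed

theorem theorem3p4:
  fixes n :: nat
  shows "real (card (dumont1_avoiding n {[1,3,4,2], [1,4,2,3]})) = little_schroeder (n + 1)"
proof (induction n rule: less_induct)
  case (less n)
  show ?case
  proof (cases n)
    case 0
    then show ?thesis
      using dumont_1342_1423_0 little_schroeder_1 by simp
  next
    case (Suc j)
    let ?s = little_schroeder
    have IH: "real (card (dumont_1342_1423 i)) = ?s (i + 1)" if "i \<le> j" for i
      using less Suc that by simp
    have "real (card (dumont_1342_1423 (Suc j))) =
      (\<Sum>k<j. ?s (k + 1) * ?s (j - k + 1)) + (\<Sum>k\<le>j. ?s (k + 1) * ?s (j - k + 1))"
      unfolding card_dumont_1342_1423_Suc of_nat_add of_nat_sum of_nat_mult
      by (intro arg_cong2[where f = "(+)"] sum.cong) (use IH in simp_all)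
    then show ?thesis
      using Suc little_schroeder_recurrence[of j] by simp
  qed
qed

end
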